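(* Let $u(n)$ be a sequence of nonnegative integers with $\lim_{n\to\infty}u(n)=\infty$, and for each $n$ let $A:\widehat{\mathbb{Z}}^{n+u(n)}\to\widehat{\mathbb{Z}}^n$ be a random $n\times(n+u(n))$ matrix whose entries are independent and each distributed according to the Haar probability measure on $\widehat{\mathbb{Z}}$. Then \[\lim_{n\to\infty}\mathbb{P}(A\text{ is surjective})=1.\]
   Context: $\widehat{\mathbb{Z}}=\prod_{p\text{ prime}}\mathbb{Z}_p$ is the profinite completion of $\mathbb{Z}$, with its Haar probability measure (the product of the Haar probability measures on the $p$-adic integers $\mathbb{Z}_p$). *)

theory Defs
  imports "HOL-Probability.Probability"
begin

text \<open>Model of the profinite integers: by the Chinese remainder theorem
  Zhat = prod_p Z_p, and each p-adic integer is written by its p-adic digit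
  expansion sum_k d_k p^k with digits d_k in {0..<p}.  An element of Zhat is
  thus an (extensional) digit function on index pairs (p,k), p prime, k :: nat.\<close>

definition zhat_idx :: "(nat \<times> nat) set" where
  "zhat_idx = {(p, k). prime p}"

definition zhat_space :: "(nat \<times> nat \<Rightarrow> nat) set" where
  "zhat_space = (\<Pi>\<^sub>E (p, k)\<in>zhat_idx. {0..<p})"

text \<open>Haar probability measure on Zhat: product over primes of the Haar
  measures on Z_p, the latter being the product of uniform measures on the digits.\<close>
definition zhat_haar :: "(nat \<times> nat \<Rightarrow> nat) measure" where
  "zhat_haar = (\<Pi>\<^sub>M (p, k)\<in>zhat_idx. uniform_count_measure {0..<p})"

definition zres :: "(nat \<times> nat \<Rightarrow> nat) \<Rightarrow> nat \<Rightarrow> nat \<Rightarrow> int" where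
  "zres x p k = (\<Sum>j<k. int (x (p, j)) * int p ^ j)"

text \<open>Equality in Zhat of (sum_j a_j * x_j) and y: equality of all components in
  Z_p = lim Z/p^k Z, i.e. congruence modulo every p^k.\<close>
definition zhat_lincomb_eq ::
  "nat \<Rightarrow> (nat \<Rightarrow> nat \<times> nat \<Rightarrow> nat) \<Rightarrow> (nat \<Rightarrow> nat \<times> nat \<Rightarrow> nat) \<Rightarrow> (nat \<times> nat \<Rightarrow> nat) \<Rightarrow> bool" where
  "zhat_lincomb_eq m a x y \<longleftrightarrow>
     (\<forall>p k. prime p \<longrightarrow>
        (\<Sum>j<m. zres (a j) p k * zres (x j) p k) mod (int p ^ k) = zres y p k mod (int p ^ k))"

definition zhat_mat_surj ::
  "nat \<Rightarrow> nat \<Rightarrow> (nat \<times> nat \<Rightarrow> nat \<times> nat \<Rightarrow> nat) \<Rightarrow> bool" where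
  "zhat_mat_surj n m A \<longleftrightarrow>
     (\<forall>y \<in> {..<n} \<rightarrow>\<^sub>E zhat_space. \<exists>x \<in> {..<m} \<rightarrow>\<^sub>E zhat_space.
        \<forall>i<n. zhat_lincomb_eq m (\<lambda>j. A (i, j)) x (y i))"

definition zhat_random_matrix :: "nat \<Rightarrow> nat \<Rightarrow> (nat \<times> nat \<Rightarrow> nat \<times> nat \<Rightarrow> nat) measure" where
  "zhat_random_matrix n m = (\<Pi>\<^sub>M ij\<in>{..<n} \<times> {..<m}. zhat_haar)"

end

theory Submission
  imports Defs "HOL-Number_Theory.Cong"
begin

text \<open>A matrix over Zhat is surjective iff for every prime p its reduction modulo p is surjective
  onto (Z/p)^n: necessity by reducing a preimage of a unit vector, sufficiency by lifting
  solutions modulo p digit by digit to solutions modulo every p^k (Hensel). The reduction modulo p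
  of a Haar-random matrix is uniform, and a uniform n x (n+u) matrix over Z/p fails to be surjective
  only if some nonzero v in (Z/p)^n annihilates all its columns; each v does so with probability
  p^-(n+u), so the failure probability at p is at most p^-u. Summing over the primes, the matrix is
  non-surjective with probability at most 2^(2-u) * sum_k k^-2, which tends to 0.\<close>

lemma space_zhat_haar: "space zhat_haar = zhat_space"
  unfolding zhat_haar_def zhat_space_def space_PiM
  by (simp add: space_uniform_count_measure case_prod_beta')

lemma prob_space_zhat_haar: "prob_space zhat_haar"
  unfolding zhat_haar_def
  by (rule prob_space_PiM)
    (auto simp: zhat_idx_def prime_gt_0_nat intro!: prob_space_uniform_count_measure)

definition zhat_residue_event :: "nat \<Rightarrow> nat \<Rightarrow> (nat \<times> nat \<Rightarrow> nat) set" where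
  "zhat_residue_event p c = {x \<in> zhat_space. x (p, 0) = c}"

lemma zhat_residue_event_prod_emb:
  "zhat_residue_event p c =
     prod_emb zhat_idx (\<lambda>(p, k). uniform_count_measure {0..<p}) {(p, 0)} (\<Pi>\<^sub>E i\<in>{(p, 0)}. {c})"
proof -
  have "(\<Pi>\<^sub>E i\<in>zhat_idx. space (case i of (p, k) \<Rightarrow> uniform_count_measure {0..<p})) = zhat_space"
    using space_zhat_haar unfolding zhat_haar_def space_PiM .
  then show ?thesis
    unfolding prod_emb_def zhat_residue_event_def
    by (auto simp: restrict_def fun_eq_iff PiE_iff) metis
qed

lemma sets_zhat_residue_event:
  assumes "prime p" "c < p"
  shows "zhat_residue_event p c \<in> sets zhat_haar"
  unfolding zhat_residue_event_prod_emb zhat_haar_def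
  by (rule sets_PiM_I) (use assms in \<open>auto simp: zhat_idx_def sets_uniform_count_measure\<close>)

lemma emeasure_zhat_residue_event:
  assumes "prime p" "c < p"
  shows "emeasure zhat_haar (zhat_residue_event p c) = ennreal (1 / real p)"
  unfolding zhat_residue_event_prod_emb zhat_haar_def
  by (subst emeasure_PiM_emb)
    (use assms in \<open>auto simp: zhat_idx_def prime_gt_0_nat sets_uniform_count_measure
      emeasure_uniform_count_measure divide_ennreal ennreal_of_nat_eq_real_of_nat
      intro!: prob_space_uniform_count_measure\<close>)

lemma space_zhat_random_matrix:
  "space (zhat_random_matrix n m) = (\<Pi>\<^sub>E ij\<in>{..<n} \<times> {..<m}. zhat_space)"
  unfolding zhat_random_matrix_def space_PiM space_zhat_haar ..

lemma prob_space_zhat_random_matrix: "prob_space (zhat_random_matrix n m)"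
  unfolding zhat_random_matrix_def by (rule prob_space_PiM) (rule prob_space_zhat_haar)

lemma zhat_space_digit_less:
  assumes "x \<in> zhat_space" "prime p"
  shows "x (p, k) < p"
  using PiE_mem[OF assms(1)[unfolded zhat_space_def], of "(p, k)"] assms(2)
  by (simp add: zhat_idx_def)

lemma zhat_random_matrix_entry:
  assumes "A \<in> space (zhat_random_matrix n m)" "i < n" "j < m"
  shows "A (i, j) \<in> zhat_space"
  using PiE_mem[OF assms(1)[unfolded space_zhat_random_matrix], of "(i, j)"] assms(2,3) by blast

definition residue_matrices :: "nat \<Rightarrow> nat \<Rightarrow> nat \<Rightarrow> (nat \<times> nat \<Rightarrow> nat) set" where
  "residue_matrices n m p = (\<Pi>\<^sub>E ij\<in>{..<n} \<times> {..<m}. {0..<p})"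

definition residue_matrix ::
  "nat \<Rightarrow> nat \<Rightarrow> nat \<Rightarrow> (nat \<times> nat \<Rightarrow> nat \<times> nat \<Rightarrow> nat) \<Rightarrow> nat \<times> nat \<Rightarrow> nat" where
  "residue_matrix n m p A = (\<lambda>ij\<in>{..<n} \<times> {..<m}. A ij (p, 0))"

lemma finite_residue_matrices: "finite (residue_matrices n m p)"
  unfolding residue_matrices_def by (auto intro!: finite_PiE)

lemma residue_matrix_in_residue_matrices:
  assumes "A \<in> space (zhat_random_matrix n m)" "prime p"
  shows "residue_matrix n m p A \<in> residue_matrices n m p"
  unfolding residue_matrix_def residue_matrices_def restrict_PiE_iff
  using zhat_space_digit_less[OF zhat_random_matrix_entry[OF assms(1)] assms(2)] by auto

lemma residue_matrix_event_eq:
  assumes "c \<in> residue_matrices n m p"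
  shows "{A \<in> space (zhat_random_matrix n m). residue_matrix n m p A = c}
    = (\<Pi>\<^sub>E ij\<in>{..<n} \<times> {..<m}. zhat_residue_event p (c ij))"
  using assms
  by (fastforce simp: space_zhat_random_matrix residue_matrix_def residue_matrices_def
      zhat_residue_event_def PiE_iff extensional_def)

lemma sets_residue_matrix_eq:
  assumes "prime p" "c \<in> residue_matrices n m p"
  shows "{A \<in> space (zhat_random_matrix n m). residue_matrix n m p A = c} \<in> sets (zhat_random_matrix n m)"
  unfolding residue_matrix_event_eq[OF assms(2)] unfolding zhat_random_matrix_def
  using assms by (intro sets_PiM_I_finite) (auto intro!: sets_zhat_residue_event simp: residue_matrices_def)

lemma measure_residue_matrix_eq:
  assumes "prime p" "c \<in> residue_matrices n m p"
  shows "measure (zhat_random_matrix n m)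
      {A \<in> space (zhat_random_matrix n m). residue_matrix n m p A = c} = 1 / real p ^ (n * m)"
proof -
  interpret product_sigma_finite "\<lambda>_. zhat_haar"
    using prob_space_zhat_haar prob_space_imp_sigma_finite by (auto simp: product_sigma_finite_def)
  have c: "c ij < p" if "ij \<in> {..<n} \<times> {..<m}" for ij
    using assms(2) that by (auto simp: residue_matrices_def PiE_iff)
  have "emeasure (zhat_random_matrix n m)
      {A \<in> space (zhat_random_matrix n m). residue_matrix n m p A = c}
    = (\<Prod>ij\<in>{..<n} \<times> {..<m}. emeasure zhat_haar (zhat_residue_event p (c ij)))"
    unfolding residue_matrix_event_eq[OF assms(2)] unfolding zhat_random_matrix_def
    by (rule emeasure_PiM) (auto intro!: sets_zhat_residue_event assms(1) c)
  also have "\<dots> = (\<Prod>ij\<in>{..<n} \<times> {..<m}. ennreal (1 / real p))"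
    by (rule prod.cong) (auto simp: emeasure_zhat_residue_event assms(1) c)
  also have "\<dots> = ennreal (1 / real p ^ (n * m))"
    by (simp add: prod_ennreal card_cartesian_product ennreal_power power_one_over)
  finally show ?thesis
    by (simp add: measure_def)
qed

lemma sets_residue_matrix_in:
  assumes "prime p" "X \<subseteq> residue_matrices n m p"
  shows "{A \<in> space (zhat_random_matrix n m). residue_matrix n m p A \<in> X} \<in> sets (zhat_random_matrix n m)"
proof -
  have "finite X" using assms(2) finite_residue_matrices by (rule finite_subset)
  moreover have "{A \<in> space (zhat_random_matrix n m). residue_matrix n m p A \<in> X}
    = (\<Union>c\<in>X. {A \<in> space (zhat_random_matrix n m). residue_matrix n m p A = c})"
    by blast
  ultimately show ?thesis
    using assms sets_residue_matrix_eq by (auto intro!: sets.finite_UN)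
qed

lemma measure_residue_matrix_in_le:
  assumes "prime p" "X \<subseteq> residue_matrices n m p"
  shows "measure (zhat_random_matrix n m)
      {A \<in> space (zhat_random_matrix n m). residue_matrix n m p A \<in> X} \<le> card X / real p ^ (n * m)"
proof -
  have "finite X" using assms(2) finite_residue_matrices by (rule finite_subset)
  have "{A \<in> space (zhat_random_matrix n m). residue_matrix n m p A \<in> X}
    = (\<Union>c\<in>X. {A \<in> space (zhat_random_matrix n m). residue_matrix n m p A = c})"
    by blast
  also have "measure (zhat_random_matrix n m) \<dots>
    \<le> (\<Sum>c\<in>X. measure (zhat_random_matrix n m)
         {A \<in> space (zhat_random_matrix n m). residue_matrix n m p A = c})"
    using assms \<open>finite X\<close> sets_residue_matrix_eq by (intro measure_UNION_le) auto
  also have "\<dots> = card X / real p ^ (n * m)"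
    using assms measure_residue_matrix_eq by (auto simp: subset_iff)
  finally show ?thesis .
qed

subsection \<open>Counting singular matrices modulo a prime\<close>

definition annihilated_mod :: "nat \<Rightarrow> nat \<Rightarrow> nat \<Rightarrow> (nat \<Rightarrow> int) \<Rightarrow> (nat \<times> nat \<Rightarrow> nat) set" where
  "annihilated_mod n m p v =
     {c \<in> residue_matrices n m p. \<forall>j<m. int p dvd (\<Sum>i<n. v i * int (c (i, j)))}"

definition singular_mod :: "nat \<Rightarrow> nat \<Rightarrow> nat \<Rightarrow> (nat \<times> nat \<Rightarrow> nat) set" where
  "singular_mod n m p =
     (\<Union>v \<in> {v \<in> {..<n} \<rightarrow>\<^sub>E {0..<int p}. \<exists>i<n. v i \<noteq> 0}. annihilated_mod n m p v)"

lemma singular_mod_subset: "singular_mod n m p \<subseteq> residue_matrices n m p"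
  by (auto simp: singular_mod_def annihilated_mod_def)

lemma annihilated_mod_determined_by_other_rows:
  assumes "prime p" "i0 < n" "\<not> int p dvd v i0"
    and c: "c \<in> annihilated_mod n m p v" and c': "c' \<in> annihilated_mod n m p v"
    and rows: "\<And>i j. i < n \<Longrightarrow> j < m \<Longrightarrow> i \<noteq> i0 \<Longrightarrow> c (i, j) = c' (i, j)"
  shows "c = c'"
proof -
  have in_range: "d \<in> extensional ({..<n} \<times> {..<m}) \<and> (\<forall>j<m. d (i0, j) < p)"
    if "d \<in> annihilated_mod n m p v" for d
    using that assms(2) by (auto simp: annihilated_mod_def residue_matrices_def PiE_iff)
  have row_i0: "c (i0, j) = c' (i0, j)" if j: "j < m" for j
  proof -
    have split: "(\<Sum>i<n. v i * int (d (i, j)))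
        = v i0 * int (d (i0, j)) + (\<Sum>i\<in>{..<n} - {i0}. v i * int (d (i, j)))" for d
      using assms(2) by (subst sum.remove[of _ i0]) auto
    have "(\<Sum>i\<in>{..<n} - {i0}. v i * int (c (i, j))) = (\<Sum>i\<in>{..<n} - {i0}. v i * int (c' (i, j)))"
      using j rows by (intro sum.cong) auto
    moreover have "[\<Sum>i<n. v i * int (c (i, j)) = \<Sum>i<n. v i * int (c' (i, j))] (mod int p)"
      using c c' j by (auto simp: annihilated_mod_def cong_iff_dvd_diff)
    ultimately have "[v i0 * int (c (i0, j)) = v i0 * int (c' (i0, j))] (mod int p)"
      unfolding split by (simp add: cong_add_rcancel)
    moreover have "coprime (v i0) (int p)"
      using assms(1,3) by (simp add: prime_imp_coprime ac_simps)
    ultimately have "[int (c (i0, j)) = int (c' (i0, j))] (mod int p)"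
      by (simp add: cong_mult_lcancel)
    then show ?thesis
      using in_range[OF c] in_range[OF c'] j cong_less_imp_eq_int[of "int (c (i0, j))" "int p" "int (c' (i0, j))"]
      by simp
  qed
  show ?thesis
  proof (rule extensionalityI)
    show "c \<in> extensional ({..<n} \<times> {..<m})" "c' \<in> extensional ({..<n} \<times> {..<m})"
      using in_range[OF c] in_range[OF c'] by blast+
    fix ij assume "ij \<in> {..<n} \<times> {..<m}"
    then show "c ij = c' ij" using rows row_i0 by (cases "fst ij = i0") auto
  qed
qed

lemma card_annihilated_mod_le:
  assumes "prime p" "i0 < n" "\<not> int p dvd v i0"
  shows "card (annihilated_mod n m p v) \<le> p ^ (n * m - m)"
proof -
  let ?J = "({..<n} - {i0}) \<times> {..<m}"
  have "inj_on (\<lambda>c. restrict c ?J) (annihilated_mod n m p v)"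
  proof (rule inj_onI)
    fix c c' assume c: "c \<in> annihilated_mod n m p v" and c': "c' \<in> annihilated_mod n m p v"
      and eq: "restrict c ?J = restrict c' ?J"
    show "c = c'"
    proof (rule annihilated_mod_determined_by_other_rows[OF assms c c'])
      fix i j assume "i < n" "j < m" "i \<noteq> i0"
      then show "c (i, j) = c' (i, j)" using fun_cong[OF eq, of "(i, j)"] by simp
    qed
  qed
  moreover have "(\<lambda>c. restrict c ?J) ` annihilated_mod n m p v \<subseteq> (\<Pi>\<^sub>E ij\<in>?J. {0..<p})"
    unfolding annihilated_mod_def residue_matrices_def
    by (intro image_subsetI, subst restrict_PiE_iff) (auto simp: PiE_iff)
  ultimately have "card (annihilated_mod n m p v) \<le> card (\<Pi>\<^sub>E ij\<in>?J. {0..<p})"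
    by (intro card_inj_on_le) (auto intro!: finite_PiE)
  also have "\<dots> = p ^ (n * m - m)"
    using assms(2) by (simp add: card_PiE card_cartesian_product diff_mult_distrib)
  finally show ?thesis .
qed

lemma card_singular_mod_le:
  assumes "prime p"
  shows "card (singular_mod n m p) \<le> p ^ n * p ^ (n * m - m)"
proof -
  let ?V = "{v \<in> {..<n} \<rightarrow>\<^sub>E {0..<int p}. \<exists>i<n. v i \<noteq> 0}"
  have "finite ?V" by (auto intro!: finite_PiE)
  then have "card (singular_mod n m p) \<le> (\<Sum>v\<in>?V. card (annihilated_mod n m p v))"
    unfolding singular_mod_def by (rule card_UN_le)
  also have "\<dots> \<le> (\<Sum>v\<in>?V. p ^ (n * m - m))"
  proof (rule sum_mono)
    fix v assume "v \<in> ?V"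
    then obtain i0 where "i0 < n" "0 < v i0" "v i0 < int p" by (force simp: PiE_iff)
    then show "card (annihilated_mod n m p v) \<le> p ^ (n * m - m)"
      using card_annihilated_mod_le[OF assms] zdvd_not_zless by blast
  qed
  also have "\<dots> = card ?V * p ^ (n * m - m)"
    by simp
  also have "\<dots> \<le> card ({..<n} \<rightarrow>\<^sub>E {0..<int p}) * p ^ (n * m - m)"
    by (intro mult_right_mono card_mono) (auto intro!: finite_PiE)
  also have "card ({..<n} \<rightarrow>\<^sub>E {0..<int p}) = p ^ n"
    by (simp add: card_PiE)
  finally show ?thesis .
qed

lemma measure_singular_mod_le:
  assumes "prime p"
  shows "measure (zhat_random_matrix n (n + u))
    {A \<in> space (zhat_random_matrix n (n + u)). residue_matrix n (n + u) p A \<in> singular_mod n (n + u) p}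
    \<le> 1 / real p ^ u"
proof (cases "n = 0")
  case True
  then show ?thesis by (simp add: singular_mod_def)
next
  case False
  let ?N = "n * (n + u)"
  have "measure (zhat_random_matrix n (n + u))
      {A \<in> space (zhat_random_matrix n (n + u)). residue_matrix n (n + u) p A \<in> singular_mod n (n + u) p}
    \<le> card (singular_mod n (n + u) p) / real p ^ ?N"
    by (rule measure_residue_matrix_in_le[OF assms singular_mod_subset])
  also have "\<dots> \<le> real (p ^ n * p ^ (?N - (n + u))) / real p ^ ?N"
    using card_singular_mod_le[OF assms, of n "n + u"]
    by (intro divide_right_mono) (simp_all only: of_nat_le_iff zero_le_power of_nat_0_le_iff)
  also have "\<dots> = 1 / real p ^ u"
  proof -
    have "n + (?N - (n + u)) + u = ?N"
      using False by (cases n) (auto simp: algebra_simps)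
    then have "real p ^ n * real p ^ (?N - (n + u)) * real p ^ u = real p ^ ?N"
      by (metis power_add)
    then show ?thesis
      using prime_gt_0_nat[OF assms] by (simp add: field_simps)
  qed
  finally show ?thesis .
qed

subsection \<open>Linear algebra modulo a prime\<close>

lemma spanning_mod_extend:
  fixes H :: "(nat \<Rightarrow> int) set"
  assumes add: "\<And>h g. h \<in> H \<Longrightarrow> g \<in> H \<Longrightarrow> (\<lambda>i. h i + g i) \<in> H"
    and smult: "\<And>h c. h \<in> H \<Longrightarrow> (\<lambda>i. c * h i) \<in> H"
    and w: "w \<in> H" "[w n = 1] (mod q)"
    and spans: "\<forall>t. \<exists>h\<in>H. \<forall>i<n. [h i - h n * w i = t i] (mod q)"
  shows "\<forall>t. \<exists>h\<in>H. \<forall>i<Suc n. [h i = t i] (mod q)"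
proof
  fix t :: "nat \<Rightarrow> int"
  obtain h where h: "h \<in> H" and h_cong: "\<forall>i<n. [h i - h n * w i = t i - t n * w i] (mod q)"
    using spans[THEN spec[of _ "\<lambda>i. t i - t n * w i"]] by blast
  define g where "g i = h i + (t n - h n) * w i" for i
  have "g \<in> H" unfolding g_def using add[OF h smult[OF w(1)]] .
  moreover have "[g i = t i] (mod q)" if "i < Suc n" for i
  proof (cases "i = n")
    case True
    have "[h n + (t n - h n) * w n = h n + (t n - h n) * 1] (mod q)"
      by (intro cong_add cong_scalar_left w(2) cong_refl)
    then show ?thesis by (simp add: g_def True)
  next
    case False
    then have "[(h i - h n * w i) + t n * w i = (t i - t n * w i) + t n * w i] (mod q)"
      using h_cong that by (intro cong_add cong_refl) simp
    then show ?thesis by (simp add: g_def algebra_simps)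
  qed
  ultimately show "\<exists>h\<in>H. \<forall>i<Suc n. [h i = t i] (mod q)" by blast
qed

lemma annihilator_mod_extend:
  fixes v w :: "nat \<Rightarrow> int"
  assumes "\<forall>h\<in>H. q dvd (\<Sum>i<n. v i * (h i - h n * w i))"
  shows "\<forall>h\<in>H. q dvd (\<Sum>i<Suc n. (v(n := - (\<Sum>i<n. v i * w i))) i * h i)"
proof
  fix h assume "h \<in> H"
  have "(\<Sum>i<Suc n. (v(n := - (\<Sum>i<n. v i * w i))) i * h i) = (\<Sum>i<n. v i * (h i - h n * w i))"
    by (simp add: algebra_simps sum_subtractf sum_distrib_left)
  then show "q dvd (\<Sum>i<Suc n. (v(n := - (\<Sum>i<n. v i * w i))) i * h i)"
    using assms \<open>h \<in> H\<close> by simp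
qed

text \<open>The induction eliminates the last coordinate using a vector w of H with w n = 1 modulo p.\<close>

lemma exists_annihilator_mod_prime:
  fixes H :: "(nat \<Rightarrow> int) set"
  assumes "prime p"
    and "\<And>h g. h \<in> H \<Longrightarrow> g \<in> H \<Longrightarrow> (\<lambda>i. h i + g i) \<in> H"
    and "\<And>h c. h \<in> H \<Longrightarrow> (\<lambda>i. c * h i) \<in> H"
    and "H \<noteq> {}"
    and "\<not> (\<forall>t. \<exists>h\<in>H. \<forall>i<n. [h i = t i] (mod int p))"
  shows "\<exists>v. (\<exists>i<n. \<not> int p dvd v i) \<and> (\<forall>h\<in>H. int p dvd (\<Sum>i<n. v i * h i))"
  using assms(2-)
proof (induction n arbitrary: H)
  case 0
  then show ?case by auto
next
  case (Suc n)
  show ?case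
  proof (cases "\<forall>h\<in>H. int p dvd h n")
    case True
    then show ?thesis
      using prime_gt_1_nat[OF \<open>prime p\<close>]
      by (intro exI[of _ "\<lambda>i. if i = n then 1 else 0"]) (auto simp: sum.If_cases)
  next
    case False
    then obtain h0 where h0: "h0 \<in> H" "\<not> int p dvd h0 n" by blast
    then have "coprime (h0 n) (int p)"
      using \<open>prime p\<close> by (simp add: prime_imp_coprime ac_simps)
    then obtain c where c: "[h0 n * c = 1] (mod int p)"
      using cong_solve_coprime_int by blast
    define w where "w = (\<lambda>i. c * h0 i)"
    have w: "w \<in> H" "[w n = 1] (mod int p)"
      using Suc.prems(2)[OF h0(1)] c by (simp_all add: w_def ac_simps)
    define elim where "elim h i = h i - h n * w i" for h :: "nat \<Rightarrow> int" and i
    have "\<exists>v. (\<exists>i<n. \<not> int p dvd v i) \<and> (\<forall>h\<in>elim ` H. int p dvd (\<Sum>i<n. v i * h i))"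
    proof (rule Suc.IH)
      fix h g assume "h \<in> elim ` H" "g \<in> elim ` H"
      then obtain h1 g1 where "h1 \<in> H" "g1 \<in> H" "h = elim h1" "g = elim g1" by blast
      then show "(\<lambda>i. h i + g i) \<in> elim ` H"
        using Suc.prems(1) by (intro image_eqI[of _ _ "\<lambda>i. h1 i + g1 i"]) (auto simp: elim_def algebra_simps)
    next
      fix h c assume "h \<in> elim ` H"
      then obtain h1 where "h1 \<in> H" "h = elim h1" by blast
      then show "(\<lambda>i. c * h i) \<in> elim ` H"
        using Suc.prems(2) by (intro image_eqI[of _ _ "\<lambda>i. c * h1 i"]) (auto simp: elim_def algebra_simps)
    next
      show "elim ` H \<noteq> {}" using Suc.prems(3) by simp
      show "\<not> (\<forall>t. \<exists>h\<in>elim ` H. \<forall>i<n. [h i = t i] (mod int p))"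
      proof
        assume "\<forall>t. \<exists>h\<in>elim ` H. \<forall>i<n. [h i = t i] (mod int p)"
        then have "\<forall>t. \<exists>h\<in>H. \<forall>i<n. [h i - h n * w i = t i] (mod int p)"
          by (simp add: elim_def)
        then show False
          using spanning_mod_extend[OF Suc.prems(1,2) w] Suc.prems(4) by blast
      qed
    qed
    then obtain v where v: "\<exists>i<n. \<not> int p dvd v i" "\<forall>h\<in>H. int p dvd (\<Sum>i<n. v i * (h i - h n * w i))"
      by (auto simp: elim_def)
    show ?thesis
      using v(1) annihilator_mod_extend[OF v(2)]
      by (intro exI[of _ "v(n := - (\<Sum>i<n. v i * w i))"]) auto
  qed
qed

subsection \<open>Hensel lifting\<close>

lemma compatible_sequence_cong:
  fixes f :: "nat \<Rightarrow> 'a::unique_euclidean_ring"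
  assumes "\<And>k. [f (Suc k) = f k] (mod q ^ k)"
  shows "[f (k + l) = f k] (mod q ^ k)"
proof (induction l)
  case 0
  then show ?case by simp
next
  case (Suc l)
  have "[f (Suc (k + l)) = f (k + l)] (mod q ^ k)"
    using assms by (rule cong_dvd_modulus) (simp add: le_imp_power_dvd)
  then have "[f (Suc (k + l)) = f k] (mod q ^ k)"
    using Suc.IH by (rule cong_trans)
  then show ?case by simp
qed

text \<open>A q-adic matrix and right-hand side are given by integer residues a k, y k compatible modulo
  q^k. A solution modulo q^k is corrected in its k-th q-adic digit, which is found by solving
  modulo q.\<close>

lemma hensel_lift_step:
  fixes q :: int and a :: "nat \<Rightarrow> nat \<Rightarrow> nat \<Rightarrow> int" and y :: "nat \<Rightarrow> nat \<Rightarrow> int"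
  assumes "q > 0"
    and a_compat: "\<And>k i j. [a (Suc k) i j = a k i j] (mod q ^ k)"
    and y_compat: "\<And>k i. [y (Suc k) i = y k i] (mod q ^ k)"
    and surj_mod: "\<And>t. \<exists>d. \<forall>i<n. [\<Sum>j<m. a 1 i j * d j = t i] (mod q)"
    and sol: "\<forall>i<n. [\<Sum>j<m. a k i j * X j = y k i] (mod q ^ k)"
  shows "\<exists>d. (\<forall>j. d j \<in> {0..<q}) \<and>
    (\<forall>i<n. [\<Sum>j<m. a (Suc k) i j * (X j + q ^ k * d j) = y (Suc k) i] (mod q ^ Suc k))"
proof -
  have residual_dvd: "q ^ k dvd (\<Sum>j<m. a (Suc k) i j * X j) - y (Suc k) i" if "i < n" for i
  proof -
    have "[\<Sum>j<m. a (Suc k) i j * X j = \<Sum>j<m. a k i j * X j] (mod q ^ k)"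
      by (intro cong_sum cong_scalar_right a_compat)
    also have "[\<Sum>j<m. a k i j * X j = y k i] (mod q ^ k)"
      using sol that by blast
    also have "[y k i = y (Suc k) i] (mod q ^ k)"
      by (rule cong_sym, rule y_compat)
    finally show ?thesis by (simp add: cong_iff_dvd_diff)
  qed
  define r where "r i = ((\<Sum>j<m. a (Suc k) i j * X j) - y (Suc k) i) div q ^ k" for i
  have r: "(\<Sum>j<m. a (Suc k) i j * X j) - y (Suc k) i = q ^ k * r i" if "i < n" for i
    using residual_dvd[OF that] by (simp add: r_def)
  obtain d0 where d0: "\<forall>i<n. [\<Sum>j<m. a 1 i j * d0 j = - r i] (mod q)"
    using surj_mod[of "\<lambda>i. - r i"] by blast
  define d where "d j = d0 j mod q" for j
  have "[\<Sum>j<m. a (Suc k) i j * (X j + q ^ k * d j) = y (Suc k) i] (mod q ^ Suc k)"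
    if "i < n" for i
  proof -
    have a_level_1: "[a (Suc k) i j = a 1 i j] (mod q)" for j
      using compatible_sequence_cong[of "\<lambda>k. a k i j" q 1 k] a_compat by simp
    have "[\<Sum>j<m. a (Suc k) i j * d j = \<Sum>j<m. a 1 i j * d0 j] (mod q)"
      by (intro cong_sum cong_mult a_level_1) (simp add: d_def)
    also have "[\<Sum>j<m. a 1 i j * d0 j = - r i] (mod q)"
      using d0 that by blast
    finally have "q dvd r i + (\<Sum>j<m. a (Suc k) i j * d j)"
      by (simp add: cong_iff_dvd_diff add.commute)
    then have "q ^ Suc k dvd q ^ k * (r i + (\<Sum>j<m. a (Suc k) i j * d j))"
      by (simp add: mult_dvd_mono)
    moreover have "(\<Sum>j<m. a (Suc k) i j * (X j + q ^ k * d j)) - y (Suc k) i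
        = ((\<Sum>j<m. a (Suc k) i j * X j) - y (Suc k) i) + q ^ k * (\<Sum>j<m. a (Suc k) i j * d j)"
      by (simp add: distrib_left sum.distrib sum_distrib_left mult.left_commute)
    ultimately show ?thesis
      using r[OF that] by (simp add: cong_iff_dvd_diff distrib_left)
  qed
  moreover have "\<forall>j. d j \<in> {0..<q}"
    using \<open>q > 0\<close> by (simp add: d_def)
  ultimately show ?thesis by blast
qed

lemma hensel_lift:
  fixes q :: int and a :: "nat \<Rightarrow> nat \<Rightarrow> nat \<Rightarrow> int" and y :: "nat \<Rightarrow> nat \<Rightarrow> int"
  assumes "q > 0"
    and "\<And>k i j. [a (Suc k) i j = a k i j] (mod q ^ k)"
    and "\<And>k i. [y (Suc k) i = y k i] (mod q ^ k)"
    and "\<And>t. \<exists>d. \<forall>i<n. [\<Sum>j<m. a 1 i j * d j = t i] (mod q)"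
  shows "\<exists>D. (\<forall>k j. D k j \<in> {0..<q}) \<and>
    (\<forall>k. \<forall>i<n. [\<Sum>j<m. a k i j * (\<Sum>l<k. D l j * q ^ l) = y k i] (mod q ^ k))"
proof -
  define digit where "digit k X = (SOME d. (\<forall>j. d j \<in> {0..<q}) \<and>
    (\<forall>i<n. [\<Sum>j<m. a (Suc k) i j * (X j + q ^ k * d j) = y (Suc k) i] (mod q ^ Suc k)))" for k X
  define X where "X = rec_nat (\<lambda>j. 0) (\<lambda>k Xk j. Xk j + q ^ k * digit k Xk j)"
  define D where "D k = digit k (X k)" for k
  have X_Suc: "X (Suc k) = (\<lambda>j. X k j + q ^ k * D k j)" for k
    by (simp add: X_def D_def)
  have step: "(\<forall>j. D k j \<in> {0..<q}) \<and>
      (\<forall>i<n. [\<Sum>j<m. a (Suc k) i j * X (Suc k) j = y (Suc k) i] (mod q ^ Suc k))"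
    if "\<forall>i<n. [\<Sum>j<m. a k i j * X k j = y k i] (mod q ^ k)" for k
    using someI_ex[OF hensel_lift_step[OF assms that]] unfolding X_Suc D_def digit_def .
  have sol: "\<forall>i<n. [\<Sum>j<m. a k i j * X k j = y k i] (mod q ^ k)" for k
  proof (induction k)
    case (Suc k)
    then show ?case using step by blast
  qed simp
  have "X k j = (\<Sum>l<k. D l j * q ^ l)" for k j
    by (induction k) (simp_all add: X_def D_def ac_simps)
  then show ?thesis
    using step sol by (intro exI[of _ D]) auto
qed

subsection \<open>Surjectivity over Zhat and reduction modulo primes\<close>

lemma zres_compatible: "[zres x p (Suc k) = zres x p k] (mod int p ^ k)"
  by (simp add: zres_def cong_iff_dvd_diff)

lemma residue_matrix_apply: "i < n \<Longrightarrow> j < m \<Longrightarrow> residue_matrix n m p A (i, j) = A (i, j) (p, 0)"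
  by (simp add: residue_matrix_def)

lemma singular_modI:
  assumes "prime p" "c \<in> residue_matrices n m p" "i0 < n" "\<not> int p dvd v i0"
    and annihilates: "\<forall>j<m. int p dvd (\<Sum>i<n. v i * int (c (i, j)))"
  shows "c \<in> singular_mod n m p"
proof -
  define v' where "v' = (\<lambda>i\<in>{..<n}. v i mod int p)"
  have "v' \<in> {..<n} \<rightarrow>\<^sub>E {0..<int p}"
    using prime_gt_0_nat[OF assms(1)] by (simp add: v'_def)
  moreover have "v' i0 \<noteq> 0"
    using assms(3,4) by (simp add: v'_def dvd_eq_mod_eq_0)
  moreover have "int p dvd (\<Sum>i<n. v' i * int (c (i, j)))" if "j < m" for j
  proof -
    have "[\<Sum>i<n. v' i * int (c (i, j)) = \<Sum>i<n. v i * int (c (i, j))] (mod int p)"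
      by (intro cong_sum cong_scalar_right) (simp add: v'_def)
    then show ?thesis
      using annihilates that by (simp add: cong_dvd_iff)
  qed
  ultimately show ?thesis
    using assms(2,3) unfolding singular_mod_def annihilated_mod_def by blast
qed

lemma surj_mod_if_not_singular_mod:
  assumes "prime p" "c \<in> residue_matrices n m p" "c \<notin> singular_mod n m p"
  shows "\<exists>d. \<forall>i<n. [\<Sum>j<m. int (c (i, j)) * d j = t i] (mod int p)"
proof -
  define H where "H = range (\<lambda>d i. \<Sum>j<m. int (c (i, j)) * d j)"
  have "\<forall>t. \<exists>h\<in>H. \<forall>i<n. [h i = t i] (mod int p)"
  proof (rule ccontr)
    assume not_spanning: "\<not> (\<forall>t. \<exists>h\<in>H. \<forall>i<n. [h i = t i] (mod int p))"
    have add: "(\<lambda>i. h i + g i) \<in> H" if hg: "h \<in> H" "g \<in> H" for h g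
    proof -
      obtain d1 d2 where "h = (\<lambda>i. \<Sum>j<m. int (c (i, j)) * d1 j)" "g = (\<lambda>i. \<Sum>j<m. int (c (i, j)) * d2 j)"
        using hg unfolding H_def by blast
      then show ?thesis
        unfolding H_def by (intro image_eqI[of _ _ "\<lambda>j. d1 j + d2 j"]) (auto simp: distrib_left sum.distrib)
    qed
    have smult: "(\<lambda>i. a * h i) \<in> H" if h: "h \<in> H" for h a
    proof -
      obtain d where "h = (\<lambda>i. \<Sum>j<m. int (c (i, j)) * d j)"
        using h unfolding H_def by blast
      then show ?thesis
        unfolding H_def by (intro image_eqI[of _ _ "\<lambda>j. a * d j"]) (auto simp: sum_distrib_left ac_simps)
    qed
    obtain v i0 where v: "i0 < n" "\<not> int p dvd v i0" "\<forall>h\<in>H. int p dvd (\<Sum>i<n. v i * h i)"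
      using exists_annihilator_mod_prime[OF assms(1) add smult _ not_spanning] by (auto simp: H_def)
    have "(\<lambda>i. int (c (i, j))) \<in> H" if "j < m" for j
      unfolding H_def using that
      by (intro image_eqI[of _ _ "\<lambda>j'. of_bool (j' = j)"]) (auto simp: fun_eq_iff)
    then have "c \<in> singular_mod n m p"
      using v by (intro singular_modI[where v = v, OF assms(1,2) v(1,2)]) auto
    then show False using assms(3) by contradiction
  qed
  then show ?thesis unfolding H_def by blast
qed

lemma p_adic_solution_exists:
  assumes A: "A \<in> space (zhat_random_matrix n m)" and p: "prime p"
    and not_singular: "residue_matrix n m p A \<notin> singular_mod n m p"
  shows "\<exists>D. (\<forall>k j. D k j \<in> {0..<int p}) \<and> (\<forall>k. \<forall>i<n.
      [\<Sum>j<m. zres (A (i, j)) p k * (\<Sum>l<k. D l j * int p ^ l) = zres (y i) p k] (mod int p ^ k))"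
proof (rule hensel_lift[where a = "\<lambda>k i j. zres (A (i, j)) p k" and y = "\<lambda>k i. zres (y i) p k"])
  show "int p > 0" using p by (simp add: prime_gt_0_nat)
  show "\<exists>d. \<forall>i<n. [\<Sum>j<m. zres (A (i, j)) p 1 * d j = t i] (mod int p)" for t
  proof -
    obtain d where d: "\<forall>i<n. [\<Sum>j<m. int (residue_matrix n m p A (i, j)) * d j = t i] (mod int p)"
      using surj_mod_if_not_singular_mod[OF p residue_matrix_in_residue_matrices[OF A p] not_singular]
      by blast
    have "(\<Sum>j<m. int (residue_matrix n m p A (i, j)) * d j) = (\<Sum>j<m. zres (A (i, j)) p 1 * d j)"
      if "i < n" for i
      using that by (intro sum.cong) (simp_all add: residue_matrix_apply zres_def)
    then show ?thesis using d by auto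
  qed
qed (rule zres_compatible)+

lemma zhat_mat_surj_if_not_singular_mod:
  assumes A: "A \<in> space (zhat_random_matrix n m)"
    and not_singular: "\<And>p. prime p \<Longrightarrow> residue_matrix n m p A \<notin> singular_mod n m p"
  shows "zhat_mat_surj n m A"
  unfolding zhat_mat_surj_def
proof
  fix y assume "y \<in> {..<n} \<rightarrow>\<^sub>E zhat_space"
  have "\<exists>D. \<forall>p. prime p \<longrightarrow> (\<forall>k j. D p k j \<in> {0..<int p}) \<and> (\<forall>k. \<forall>i<n.
      [\<Sum>j<m. zres (A (i, j)) p k * (\<Sum>l<k. D p l j * int p ^ l) = zres (y i) p k] (mod int p ^ k))"
    using p_adic_solution_exists[OF A _ not_singular] by (intro choice) blast
  then obtain D where D: "\<And>p k j. prime p \<Longrightarrow> D p k j \<in> {0..<int p}"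
    and D_sol: "\<And>p k i. prime p \<Longrightarrow> i < n \<Longrightarrow>
      [\<Sum>j<m. zres (A (i, j)) p k * (\<Sum>l<k. D p l j * int p ^ l) = zres (y i) p k] (mod int p ^ k)"
    by blast
  define x where "x = (\<lambda>j\<in>{..<m}. \<lambda>(q, k)\<in>zhat_idx. nat (D q k j))"
  have "x \<in> {..<m} \<rightarrow>\<^sub>E zhat_space"
    unfolding x_def zhat_space_def restrict_PiE_iff using D by (auto simp: zhat_idx_def nat_less_iff)
  moreover have "zres (x j) q k = (\<Sum>l<k. D q l j * int q ^ l)" if "j < m" "prime q" for j q k
    unfolding zres_def using D[OF that(2)] that
    by (intro sum.cong) (auto simp: x_def zhat_idx_def)
  then have "zhat_lincomb_eq m (\<lambda>j. A (i, j)) x (y i)" if "i < n" for i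
    unfolding zhat_lincomb_eq_def using D_sol that by (simp add: cong_def)
  ultimately show "\<exists>x\<in>{..<m} \<rightarrow>\<^sub>E zhat_space. \<forall>i<n. zhat_lincomb_eq m (\<lambda>j. A (i, j)) x (y i)"
    by blast
qed

text \<open>A preimage of the unit vector e_i0 (in the digit at p) under A, paired with an annihilator v,
  would give v_i0 = 0 modulo p.\<close>

lemma not_singular_mod_if_zhat_mat_surj:
  assumes A: "A \<in> space (zhat_random_matrix n m)" and surj: "zhat_mat_surj n m A" and p: "prime p"
  shows "residue_matrix n m p A \<notin> singular_mod n m p"
proof
  let ?a = "\<lambda>i j. int (A (i, j) (p, 0))"
  assume "residue_matrix n m p A \<in> singular_mod n m p"
  then obtain v i0 where v: "v \<in> {..<n} \<rightarrow>\<^sub>E {0..<int p}" "i0 < n" "v i0 \<noteq> 0"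
    and columns: "\<forall>j<m. int p dvd (\<Sum>i<n. v i * int (residue_matrix n m p A (i, j)))"
    by (auto simp: singular_mod_def annihilated_mod_def)
  have annihilates: "int p dvd (\<Sum>i<n. v i * ?a i j)" if "j < m" for j
  proof -
    have "(\<Sum>i<n. v i * int (residue_matrix n m p A (i, j))) = (\<Sum>i<n. v i * ?a i j)"
      using that by (intro sum.cong) (simp_all add: residue_matrix_apply)
    moreover have "int p dvd (\<Sum>i<n. v i * int (residue_matrix n m p A (i, j)))"
      using columns that by blast
    ultimately show ?thesis by (simp only:)
  qed
  define e where
    "e = (\<lambda>i\<in>{..<n}. \<lambda>(q, k)\<in>zhat_idx. if q = p \<and> k = 0 \<and> i = i0 then (1::nat) else 0)"
  have "e \<in> {..<n} \<rightarrow>\<^sub>E zhat_space"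
    unfolding e_def zhat_space_def restrict_PiE_iff
    using p by (auto simp: zhat_idx_def prime_gt_Suc_0_nat prime_gt_0_nat)
  then obtain x where x: "\<forall>i<n. zhat_lincomb_eq m (\<lambda>j. A (i, j)) x (e i)"
    using surj unfolding zhat_mat_surj_def by blast
  let ?x = "\<lambda>j. int (x j (p, 0))"
  have row: "[\<Sum>j<m. ?a i j * ?x j = of_bool (i = i0)] (mod int p)" if "i < n" for i
  proof -
    have "(\<Sum>j<m. zres (A (i, j)) p 1 * zres (x j) p 1) mod int p ^ 1 = zres (e i) p 1 mod int p ^ 1"
      using x that p unfolding zhat_lincomb_eq_def by blast
    then show ?thesis
      using that p by (simp add: zres_def cong_def e_def zhat_idx_def)
  qed
  have "(\<Sum>j<m. ?x j * (\<Sum>i<n. v i * ?a i j)) = (\<Sum>i<n. v i * (\<Sum>j<m. ?a i j * ?x j))"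
    by (simp add: sum_distrib_left sum.swap[of _ "{..<n}"] ac_simps)
  also have "[\<Sum>i<n. v i * (\<Sum>j<m. ?a i j * ?x j) = \<Sum>i<n. v i * of_bool (i = i0)] (mod int p)"
    using row by (intro cong_sum cong_scalar_left) auto
  also have "(\<Sum>i<n. v i * of_bool (i = i0)) = v i0"
    using v(2) by simp
  finally have "int p dvd (\<Sum>j<m. ?x j * (\<Sum>i<n. v i * ?a i j)) \<longleftrightarrow> int p dvd v i0"
    by (rule cong_dvd_iff)
  moreover have "int p dvd (\<Sum>j<m. ?x j * (\<Sum>i<n. v i * ?a i j))"
    using annihilates by (intro dvd_sum) simp
  ultimately have "int p dvd v i0"
    by blast
  moreover have "0 \<le> v i0" "v i0 < int p"
    using v by (auto simp: PiE_iff)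
  ultimately show False
    using zdvd_not_zless v(3) by force
qed

definition singular_event :: "nat \<Rightarrow> nat \<Rightarrow> nat \<Rightarrow> (nat \<times> nat \<Rightarrow> nat \<times> nat \<Rightarrow> nat) set" where
  "singular_event n m p =
     {A \<in> space (zhat_random_matrix n m). prime p \<and> residue_matrix n m p A \<in> singular_mod n m p}"

lemma zhat_mat_surj_event_eq:
  "{A \<in> space (zhat_random_matrix n m). zhat_mat_surj n m A}
    = space (zhat_random_matrix n m) - (\<Union>p. singular_event n m p)"
proof -
  have "zhat_mat_surj n m A \<longleftrightarrow> (\<forall>p. A \<notin> singular_event n m p)"
    if A: "A \<in> space (zhat_random_matrix n m)" for A
  proof
    assume "zhat_mat_surj n m A"
    then show "\<forall>p. A \<notin> singular_event n m p"
      using not_singular_mod_if_zhat_mat_surj[OF A] by (simp add: singular_event_def)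
  next
    assume "\<forall>p. A \<notin> singular_event n m p"
    then show "zhat_mat_surj n m A"
      using A by (intro zhat_mat_surj_if_not_singular_mod[OF A]) (simp add: singular_event_def)
  qed
  then show ?thesis by blast
qed

lemma sets_singular_event: "singular_event n m p \<in> sets (zhat_random_matrix n m)"
proof (cases "prime p")
  case True
  then show ?thesis
    using sets_residue_matrix_in[OF True singular_mod_subset] by (simp add: singular_event_def)
qed (simp add: singular_event_def)

lemma measure_singular_event_le:
  assumes "2 \<le> u"
  shows "measure (zhat_random_matrix n (n + u)) (singular_event n (n + u) p)
    \<le> (1 / 2) ^ (u - 2) * inverse (real p ^ 2)"
proof (cases "prime p")
  case True
  obtain w where u: "u = w + 2"
    using le_Suc_ex[OF assms] by (auto simp: add.commute)
  have "measure (zhat_random_matrix n (n + u)) (singular_event n (n + u) p) \<le> 1 / real p ^ u"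
    using measure_singular_mod_le[OF True] True by (simp add: singular_event_def)
  also have "\<dots> = (1 / real p) ^ w * inverse (real p ^ 2)"
    by (simp add: u power_add power_one_over inverse_eq_divide power2_eq_square)
  also have "\<dots> \<le> (1 / 2) ^ w * inverse (real p ^ 2)"
    using prime_ge_2_nat[OF True] by (intro mult_right_mono power_mono) (auto simp: field_simps)
  finally show ?thesis by (simp add: u)
next
  case False
  then show ?thesis by (simp add: singular_event_def)
qed

lemma measure_zhat_mat_surj_ge:
  assumes "2 \<le> u"
  shows "1 - (1 / 2) ^ (u - 2) * (\<Sum>p. inverse (real p ^ 2))
    \<le> measure (zhat_random_matrix n (n + u))
        {A \<in> space (zhat_random_matrix n (n + u)). zhat_mat_surj n (n + u) A}"
proof -
  let ?M = "zhat_random_matrix n (n + u)"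
  interpret prob_space ?M by (rule prob_space_zhat_random_matrix)
  have summable: "summable (\<lambda>p. (1 / 2) ^ (u - 2) * inverse (real p ^ 2))"
    using inverse_power_summable[of 2, where 'a = real] by (intro summable_mult) simp
  have summable_measure: "summable (\<lambda>p. measure ?M (singular_event n (n + u) p))"
    by (rule summable_comparison_test'[OF summable]) (simp add: measure_singular_event_le[OF assms])
  have "measure ?M (\<Union>p. singular_event n (n + u) p) \<le> (\<Sum>p. measure ?M (singular_event n (n + u) p))"
    using sets_singular_event summable_measure by (intro finite_measure_subadditive_countably) auto
  also have "\<dots> \<le> (\<Sum>p. (1 / 2) ^ (u - 2) * inverse (real p ^ 2))"
    using measure_singular_event_le[OF assms] summable_measure summable by (rule suminf_le)
  also have "\<dots> = (1 / 2) ^ (u - 2) * (\<Sum>p. inverse (real p ^ 2))"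
    using inverse_power_summable[of 2, where 'a = real] by (intro suminf_mult) simp
  finally show ?thesis
    using prob_compl[of "\<Union>p. singular_event n (n + u) p"] sets_singular_event
    by (auto simp: zhat_mat_surj_event_eq)
qed

theorem corollary7:
  fixes u :: "nat \<Rightarrow> nat"
  assumes "filterlim u at_top sequentially"
  shows "(\<lambda>n. measure (zhat_random_matrix n (n + u n))
            {A \<in> space (zhat_random_matrix n (n + u n)). zhat_mat_surj n (n + u n) A})
         \<longlonglongrightarrow> 1"
proof (rule tendsto_sandwich)
  define S :: real where "S = (\<Sum>p. inverse (real p ^ 2))"
  have "(\<lambda>w. (1 / 2 :: real) ^ w) \<longlonglongrightarrow> 0"
    by (rule LIMSEQ_power_zero) simp
  then have "(\<lambda>n. (1 / 2 :: real) ^ (u n - 2)) \<longlonglongrightarrow> 0"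
    using filterlim_compose[OF _ filterlim_compose[OF filterlim_minus_const_nat_at_top assms]] by blast
  then have "(\<lambda>n. 1 - (1 / 2) ^ (u n - 2) * S) \<longlonglongrightarrow> 1 - 0 * S"
    by (intro tendsto_intros)
  then show "(\<lambda>n. 1 - (1 / 2) ^ (u n - 2) * S) \<longlonglongrightarrow> 1"
    by simp
  have "eventually (\<lambda>n. 2 \<le> u n) sequentially"
    using assms by (simp add: filterlim_at_top)
  then show "eventually (\<lambda>n. 1 - (1 / 2) ^ (u n - 2) * S \<le> measure (zhat_random_matrix n (n + u n))
      {A \<in> space (zhat_random_matrix n (n + u n)). zhat_mat_surj n (n + u n) A}) sequentially"
    unfolding S_def by eventually_elim (rule measure_zhat_mat_surj_ge)
  show "eventually (\<lambda>n. measure (zhat_random_matrix n (n + u n))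
      {A \<in> space (zhat_random_matrix n (n + u n)). zhat_mat_surj n (n + u n) A} \<le> 1) sequentially"
    by (intro always_eventually allI prob_space.prob_le_1 prob_space_zhat_random_matrix)
  show "(\<lambda>n. 1) \<longlonglongrightarrow> 1" by simp
qed

end
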